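(* Let $\mathbb P$ be a forcing by Silver trees, $S,T\in\mathbb P$, $f:2^\omega\to 2^\omega$ continuous, and $\sigma\in 2^{<\omega}$. Then: (i) there are $S',T'\in\mathbb P$ with $S'\subseteq S$, $T'\subseteq T$ and $[T']\cap(\sigma\cdot f[[S']])=\emptyset$; (ii) if $\tau\in 2^{<\omega}$, $T=\tau\cdot S$, and $f$ is regular on $S$ inside $\mathbb P$, then there are $S',T'\in\mathbb P$ with $S'\subseteq S$, $T'\subseteq T$, $T'=\tau\cdot S'$ and $[T']\cap(\sigma\cdot f[[S']])=\emptyset$.
   Context: $2^{<\omega}$ is the set of finite binary strings, $2^\omega$ the Cantor space. A set $T\subseteq 2^{<\omega}$ is a Silver tree if there are strings $u_0,u_1,\dots$ such that $T$ consists exactly of all strings $u_0{}^\frown i_0{}^\frown\cdots{}^\frown u_m{}^\frown i_m$ ($m<\omega$, $i_k\in\{0,1\}$) and all their initial segments; $[T]$ is the set of its infinite branches. For $u\in T$, $T\restriction u=\{t\in T:u\subseteq t\text{ or }t\subseteq u\}$. Actions: for $s\in 2^{<\omega}$ and $x\in 2^\omega$, $(s\cdot x)(k)=x(k)+s(k)\bmod 2$ for $k<|s|$ and $(s\cdot x)(k)=x(k)$ otherwise; $s\cdot X=\{s\cdot x:x\in X\}$; for strings $s\in 2^m$, $t\in 2^k$ with $m\le k$, $(s\cdot t)(j)=t(j)+s(j)\bmod 2$ for $j<m$ and $=t(j)$ for $m\le j<k$, and if $m>k$, $s\cdot t=(s\restriction k)\cdot t$; $s\cdot T=\{s\cdot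 t:t\in T\}$. A forcing by Silver trees is a set $\mathbb P$ of Silver trees closed under $T\mapsto T\restriction u$ ($u\in T$) and $T\mapsto\sigma\cdot T$. A continuous $f:2^\omega\to 2^\omega$ is regular on $T\in\mathbb P$ inside $\mathbb P$ if there is no $T'\in\mathbb P$ with $T'\subseteq T$ and no $\sigma\in 2^{<\omega}$ such that $f(x)=\sigma\cdot x$ for all $x\in[T']$. *)

theory Defs
  imports "HOL-Analysis.Analysis" "HOL-Library.Sublist"
begin

text \<open>Finite binary strings are \<open>bool list\<close>; Cantor space is \<open>nat \<Rightarrow> bool\<close>
  (with the product topology of the discrete space \<open>bool\<close>). Addition mod 2 is \<open>\<noteq>\<close> (xor).\<close>

definition silver_node :: "(nat \<Rightarrow> bool list) \<Rightarrow> bool list \<Rightarrow> bool list" where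
  "silver_node u is = concat (map (\<lambda>k. u k @ [is ! k]) [0..<length is])"

definition silver_tree :: "bool list set \<Rightarrow> bool" where
  "silver_tree T \<longleftrightarrow> (\<exists>u. T = {t. \<exists>is. is \<noteq> [] \<and> prefix t (silver_node u is)})"

definition branches :: "bool list set \<Rightarrow> (nat \<Rightarrow> bool) set" where
  "branches T = {x. \<forall>n. map x [0..<n] \<in> T}"

definition restr :: "bool list set \<Rightarrow> bool list \<Rightarrow> bool list set" where
  "restr T u = {t \<in> T. prefix u t \<or> prefix t u}"

definition act_pt :: "bool list \<Rightarrow> (nat \<Rightarrow> bool) \<Rightarrow> (nat \<Rightarrow> bool)" where
  "act_pt s x = (\<lambda>k. if k < length s then x k \<noteq> s ! k else x k)"

definition act_set :: "bool list \<Rightarrow> (nat \<Rightarrow> bool) set \<Rightarrow> (nat \<Rightarrow> bool) set" where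
  "act_set s X = act_pt s ` X"

definition act_str :: "bool list \<Rightarrow> bool list \<Rightarrow> bool list" where
  "act_str s t = map (\<lambda>j. if j < length s then t ! j \<noteq> s ! j else t ! j) [0..<length t]"

definition act_tree :: "bool list \<Rightarrow> bool list set \<Rightarrow> bool list set" where
  "act_tree s T = act_str s ` T"

definition silver_forcing :: "bool list set set \<Rightarrow> bool" where
  "silver_forcing P \<longleftrightarrow>
     (\<forall>T\<in>P. silver_tree T) \<and>
     (\<forall>T\<in>P. \<forall>u\<in>T. restr T u \<in> P) \<and>
     (\<forall>T\<in>P. \<forall>\<sigma>. act_tree \<sigma> T \<in> P)"

definition regular_on :: "((nat \<Rightarrow> bool) \<Rightarrow> (nat \<Rightarrow> bool)) \<Rightarrow> bool list set \<Rightarrow> bool list set set \<Rightarrow> bool" where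
  "regular_on f T P \<longleftrightarrow>
     \<not> (\<exists>T'\<in>P. T' \<subseteq> T \<and> (\<exists>\<sigma>. \<forall>x\<in>branches T'. f x = act_pt \<sigma> x))"

end

theory Submission
  imports Defs
begin

text \<open>By continuity, the \<open>N\<close>-th bit of \<open>f y\<close> only depends on
  an initial segment of \<open>y\<close>; so restricting \<open>S\<close> to a long enough initial segment \<open>u\<close> of a
  branch \<open>x\<close> freezes the \<open>N\<close>-th bit of \<open>\<sigma> \<cdot> f y\<close> for all branches \<open>y\<close> of \<open>S \<restriction> u\<close>.
  For (i) we pick \<open>N\<close> at a splitting node of \<open>T\<close> and pass to the successor carrying the other
  bit. For (ii), regularity yields a branch \<open>x\<close> of \<open>S\<close> with \<open>\<sigma> \<cdot> f x \<noteq> \<tau> \<cdot> x\<close>, and we take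
  \<open>N\<close> where they differ; the same restriction of \<open>S\<close> also freezes the \<open>N\<close>-th bit of the branches
  of \<open>\<tau> \<cdot> (S \<restriction> u)\<close>.\<close>

lemma continuous_on_coordinate_locally_constant:
  fixes f :: "(nat \<Rightarrow> bool) \<Rightarrow> (nat \<Rightarrow> bool)"
  assumes "continuous_on UNIV f"
  shows "\<exists>n. \<forall>y. (\<forall>k<n. y k = x k) \<longrightarrow> f y N = f x N"
proof -
  have "continuous_on UNIV (\<lambda>y. f y N)"
    using continuous_on_product_then_coordinatewise[OF assms] .
  then have "open ((\<lambda>y. f y N) -` {f x N})"
    using continuous_on_open_vimage[of UNIV "\<lambda>y. f y N"] open_discrete[of "{f x N}"] by simp
  then have "openin (product_topology (\<lambda>i. euclidean) UNIV) ((\<lambda>y. f y N) -` {f x N})"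
    by (simp add: open_fun_def)
  then have "\<exists>W. finite {i \<in> UNIV. W i \<noteq> topspace (euclidean::bool topology)} \<and>
      (\<forall>i \<in> UNIV. openin euclidean (W i)) \<and> x \<in> Pi\<^sub>E UNIV W \<and>
      Pi\<^sub>E UNIV W \<subseteq> (\<lambda>y. f y N) -` {f x N}"
    unfolding openin_product_topology_alt by (meson vimage_singleton_eq)
  then obtain W where W: "finite {i. W i \<noteq> UNIV}" "x \<in> Pi\<^sub>E UNIV W"
    "Pi\<^sub>E UNIV W \<subseteq> (\<lambda>y. f y N) -` {f x N}"
    by auto
  obtain n where n: "\<forall>i\<in>{i. W i \<noteq> UNIV}. i < n"
    using W(1) finite_nat_set_iff_bounded by blast
  have "f y N = f x N" if y: "\<forall>k<n. y k = x k" for y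
  proof -
    have "y i \<in> W i" for i
      using y W(2) n by (cases "W i = UNIV") (auto simp: PiE_iff)
    then show ?thesis using W(3) by (auto simp: PiE_iff)
  qed
  then show ?thesis by blast
qed

lemma prefix_same_length_eq: "prefix a b \<or> prefix b a \<Longrightarrow> length a = length b \<Longrightarrow> a = b"
  by (auto simp: prefix_def)

lemma branches_restr_initial_segment:
  assumes "y \<in> branches (restr S u)"
  shows "map y [0..<length u] = u"
proof -
  have "map y [0..<length u] \<in> restr S u" using assms by (simp add: branches_def)
  then show ?thesis by (auto simp: restr_def intro: prefix_same_length_eq)
qed

lemma restr_subset: "restr T u \<subseteq> T"
  by (auto simp: restr_def)

lemma act_pt_involutive: "act_pt s (act_pt s x) = x"
  by (auto simp: act_pt_def)

lemma act_pt_cong_nth: "x N = y N \<Longrightarrow> act_pt s x N = act_pt s y N"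
  by (simp add: act_pt_def)

lemma act_str_nth: "j < length t \<Longrightarrow> act_str s t ! j = (if j < length s then t ! j \<noteq> s ! j else t ! j)"
  by (simp add: act_str_def)

lemma act_str_involutive: "act_str s (act_str s t) = t"
  by (rule nth_equalityI) (auto simp: act_str_def act_str_nth)

lemma act_str_map: "act_str s (map x [0..<n]) = map (act_pt s x) [0..<n]"
  by (rule nth_equalityI) (simp_all add: act_str_def act_str_nth act_pt_def)

lemma branches_act_tree: "branches (act_tree s T) = act_set s (branches T)"
proof (intro equalityI subsetI)
  fix x assume x: "x \<in> branches (act_tree s T)"
  have "map (act_pt s x) [0..<n] \<in> T" for n
  proof -
    obtain t where "t \<in> T" "map x [0..<n] = act_str s t"
      using x by (auto simp: branches_def act_tree_def)
    then show ?thesis by (metis act_str_involutive act_str_map)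
  qed
  then have "act_pt s x \<in> branches T" by (simp add: branches_def)
  then show "x \<in> act_set s (branches T)"
    unfolding act_set_def using act_pt_involutive by (metis image_eqI)
next
  fix x assume "x \<in> act_set s (branches T)"
  then obtain y where "y \<in> branches T" "x = act_pt s y" by (auto simp: act_set_def)
  then show "x \<in> branches (act_tree s T)"
    by (auto simp: branches_def act_tree_def act_str_map[symmetric])
qed

lemma act_pt_comp: "\<exists>\<rho>. act_pt s \<circ> act_pt t = act_pt \<rho>"
proof
  let ?\<rho> = "map (\<lambda>j. (j < length s \<and> s ! j) \<noteq> (j < length t \<and> t ! j)) [0..<max (length s) (length t)]"
  show "act_pt s \<circ> act_pt t = act_pt ?\<rho>"
  proof (intro ext)
    fix x k
    show "(act_pt s \<circ> act_pt t) x k = act_pt ?\<rho> x k"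
      by (cases "k < length s"; cases "k < length t"; cases "x k"; cases "s ! k"; cases "t ! k")
        (simp_all add: act_pt_def max_def)
  qed
qed

lemma silver_tree_splitting_node:
  assumes "silver_tree T"
  shows "\<exists>w. \<forall>b. w @ [b] \<in> T"
proof -
  obtain u where u: "T = {t. \<exists>is. is \<noteq> [] \<and> prefix t (silver_node u is)}"
    using assms by (auto simp: silver_tree_def)
  have "u 0 @ [b] \<in> T" for b
    unfolding u by (auto intro!: exI[of _ "[b]"] simp: silver_node_def)
  then show ?thesis by blast
qed

lemma restr_freezes_coordinate:
  fixes f :: "(nat \<Rightarrow> bool) \<Rightarrow> (nat \<Rightarrow> bool)"
  assumes "continuous_on UNIV f" and "x \<in> branches S"
  shows "\<exists>u\<in>S. \<forall>y\<in>branches (restr S u). f y N = f x N \<and> y N = x N"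
proof -
  obtain n where n: "\<And>y. \<forall>k<n. y k = x k \<Longrightarrow> f y N = f x N"
    using continuous_on_coordinate_locally_constant[OF assms(1)] by blast
  define u where "u = map x [0..<max n (Suc N)]"
  have "u \<in> S" using assms(2) by (simp add: branches_def u_def)
  moreover have "f y N = f x N \<and> y N = x N" if "y \<in> branches (restr S u)" for y
  proof -
    have "map y [0..<max n (Suc N)] = map x [0..<max n (Suc N)]"
      using branches_restr_initial_segment[OF that] by (simp add: u_def)
    then have agree: "\<forall>k<max n (Suc N). y k = x k"
      by simp
    then have "f y N = f x N" using n[of y] by simp
    moreover have "y N = x N" using agree by simp
    ultimately show ?thesis ..
  qed
  ultimately show ?thesis by blast
qed

lemma regular_on_branch_not_translate:
  assumes "regular_on f S P" and "S \<in> P"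
  shows "\<exists>x\<in>branches S. act_pt \<sigma> (f x) \<noteq> act_pt \<tau> x"
proof -
  obtain \<rho> where \<rho>: "act_pt \<sigma> \<circ> act_pt \<tau> = act_pt \<rho>" using act_pt_comp by blast
  obtain x where x: "x \<in> branches S" and "f x \<noteq> act_pt \<rho> x"
    using assms by (auto simp: regular_on_def)
  then have "f x \<noteq> act_pt \<sigma> (act_pt \<tau> x)"
    using fun_cong[OF \<rho>, of x] by simp
  then have "act_pt \<sigma> (f x) \<noteq> act_pt \<tau> x"
    using act_pt_involutive[of \<sigma> "f x"] by metis
  with x show ?thesis by blast
qed

lemma silver_forcing_separate:
  assumes "silver_forcing P" "S \<in> P" "T \<in> P" "continuous_on UNIV f"
  shows "\<exists>S' T'. S' \<in> P \<and> T' \<in> P \<and> S' \<subseteq> S \<and> T' \<subseteq> T \<and>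
           branches T' \<inter> act_set \<sigma> (f ` branches S') = {}"
proof (cases "branches S = {}")
  case True
  then show ?thesis using assms(2,3) by (intro exI[of _ S] exI[of _ T]) (simp add: act_set_def)
next
  case False
  then obtain x where x: "x \<in> branches S" by blast
  have "silver_tree T" using assms(1,3) by (simp add: silver_forcing_def)
  then obtain w where w: "\<And>b. w @ [b] \<in> T" using silver_tree_splitting_node by meson
  let ?N = "length w" and ?b = "\<not> act_pt \<sigma> (f x) (length w)"
  obtain u where u: "u \<in> S"
    and frozen: "\<forall>y\<in>branches (restr S u). f y ?N = f x ?N \<and> y ?N = x ?N"
    using restr_freezes_coordinate[OF assms(4) x, of ?N] by blast
  have "z ?N = ?b" if "z \<in> branches (restr T (w @ [?b]))" for z
    using arg_cong[OF branches_restr_initial_segment[OF that], of "\<lambda>l. l ! ?N"]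
    by (simp add: nth_append)
  moreover have "act_pt \<sigma> (f y) ?N \<noteq> ?b" if "y \<in> branches (restr S u)" for y
    using act_pt_cong_nth[of "f y" ?N "f x" \<sigma>] frozen that by simp
  ultimately have "branches (restr T (w @ [?b])) \<inter> act_set \<sigma> (f ` branches (restr S u)) = {}"
    by (auto simp: act_set_def)
  moreover have "restr S u \<in> P" "restr T (w @ [?b]) \<in> P"
    using assms(1-3) u w by (simp_all add: silver_forcing_def)
  ultimately show ?thesis by (intro exI conjI) (simp_all add: restr_subset)
qed

lemma silver_forcing_separate_translate:
  assumes "silver_forcing P" "S \<in> P" "continuous_on UNIV f" "regular_on f S P"
  shows "\<exists>S' T'. S' \<in> P \<and> T' \<in> P \<and> S' \<subseteq> S \<and> T' \<subseteq> act_tree \<tau> S \<and> T' = act_tree \<tau> S' \<and>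
           branches T' \<inter> act_set \<sigma> (f ` branches S') = {}"
proof -
  obtain x where x: "x \<in> branches S" and "act_pt \<sigma> (f x) \<noteq> act_pt \<tau> x"
    using regular_on_branch_not_translate[OF assms(4,2)] by blast
  then obtain N where N: "act_pt \<sigma> (f x) N \<noteq> act_pt \<tau> x N" by blast
  obtain u where u: "u \<in> S"
    and frozen: "\<forall>y\<in>branches (restr S u). f y N = f x N \<and> y N = x N"
    using restr_freezes_coordinate[OF assms(3) x, of N] by blast
  have "act_pt \<sigma> (f y) N \<noteq> act_pt \<tau> y' N"
    if "y \<in> branches (restr S u)" "y' \<in> branches (restr S u)" for y y'
  proof -
    have fy: "f y N = f x N" and y': "y' N = x N" using frozen that by auto
    show ?thesis using N act_pt_cong_nth[of "f y" N "f x" \<sigma>, OF fy]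
        act_pt_cong_nth[of y' N x \<tau>, OF y'] by metis
  qed
  then have "branches (act_tree \<tau> (restr S u)) \<inter> act_set \<sigma> (f ` branches (restr S u)) = {}"
    unfolding branches_act_tree act_set_def by (auto dest: arg_cong[where f = "\<lambda>z. z N"])
  moreover have "restr S u \<in> P" "act_tree \<tau> (restr S u) \<in> P"
    using assms(1,2) u by (auto simp: silver_forcing_def)
  moreover have "act_tree \<tau> (restr S u) \<subseteq> act_tree \<tau> S"
    using restr_subset by (auto simp: act_tree_def)
  ultimately show ?thesis by (intro exI conjI) (simp_all add: restr_subset)
qed

theorem lemma7p2:
  fixes P :: "bool list set set" and S T :: "bool list set"
    and f :: "(nat \<Rightarrow> bool) \<Rightarrow> (nat \<Rightarrow> bool)" and \<sigma> :: "bool list"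
  assumes "silver_forcing P" and "S \<in> P" and "T \<in> P" and "continuous_on UNIV f"
  shows "(\<exists>S' T'. S' \<in> P \<and> T' \<in> P \<and> S' \<subseteq> S \<and> T' \<subseteq> T \<and>
            branches T' \<inter> act_set \<sigma> (f ` branches S') = {})
       \<and> (\<forall>\<tau>. T = act_tree \<tau> S \<and> regular_on f S P \<longrightarrow>
            (\<exists>S' T'. S' \<in> P \<and> T' \<in> P \<and> S' \<subseteq> S \<and> T' \<subseteq> T \<and> T' = act_tree \<tau> S' \<and>
               branches T' \<inter> act_set \<sigma> (f ` branches S') = {}))"
  using silver_forcing_separate[OF assms] silver_forcing_separate_translate[OF assms(1,2,4)]
  by blast

end
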